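(* Let $k$ be a ring and let $G$ be a group. Then for every integer $n\ge1$ there is a canonical ring isomorphism $D^1(M_n(k)[G])\simeq M_n(D^1(k[G]))$.
   Context: For a ring $R$ and group $G$, $R[G]$ is the group ring and $(R[G])[G]$ the set of finitely supported maps $\beta\colon G\to R[G]$. $D^1(R[G])=R[G]\times(R[G])[G]$ with componentwise addition and multiplication $(\alpha_1,\beta_1)*(\alpha_2,\beta_2)=(\alpha_1\alpha_2,\alpha_1\beta_2+\beta_1\alpha_2+\beta_1\beta_2)$, where $\alpha_1\alpha_2$ is the group ring product and $(\alpha\beta)(g)(h)=\sum_{t\in G}\alpha(t)\beta(gt)(t^{-1}h)$, $(\beta\alpha)(g)(h)=\sum_t\beta(g)(t)\alpha(t^{-1}h)$, $(\beta\gamma)(g)(h)=\sum_t\beta(g)(t)\gamma(gt)(t^{-1}h)$. $M_n(\cdot)$ denotes $n\times n$ matrices. *)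

theory Defs
  imports "HOL-Algebra.QuotRing"
begin

definition gsupp :: "('a, 'm) ring_scheme \<Rightarrow> 'g monoid \<Rightarrow> ('g \<Rightarrow> 'a) \<Rightarrow> 'g set" where
  "gsupp R G f = {t \<in> carrier G. f t \<noteq> \<zero>\<^bsub>R\<^esub>}"

definition group_ring :: "('a, 'm) ring_scheme \<Rightarrow> 'g monoid \<Rightarrow> ('g \<Rightarrow> 'a) ring" where
  "group_ring R G =
    \<lparr> carrier = {f. (\<forall>g\<in>carrier G. f g \<in> carrier R) \<and> (\<forall>g. g \<notin> carrier G \<longrightarrow> f g = \<zero>\<^bsub>R\<^esub>)
                    \<and> finite (gsupp R G f)},
      mult = (\<lambda>f h x. if x \<in> carrier G
                       then finsum R (\<lambda>t. f t \<otimes>\<^bsub>R\<^esub> h (inv\<^bsub>G\<^esub> t \<otimes>\<^bsub>G\<^esub> x)) (gsupp R G f)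
                       else \<zero>\<^bsub>R\<^esub>),
      one = (\<lambda>x. if x = \<one>\<^bsub>G\<^esub> then \<one>\<^bsub>R\<^esub> else \<zero>\<^bsub>R\<^esub>),
      zero = (\<lambda>x. \<zero>\<^bsub>R\<^esub>),
      add = (\<lambda>f h x. if x \<in> carrier G then f x \<oplus>\<^bsub>R\<^esub> h x else \<zero>\<^bsub>R\<^esub>) \<rparr>"

text \<open>The ring D^1(R[G]) = R[G] x (R[G])[G] with the twisted multiplication.\<close>
definition D1_mult :: "('a, 'm) ring_scheme \<Rightarrow> 'g monoid \<Rightarrow>
    ('g \<Rightarrow> 'a) \<times> ('g \<Rightarrow> 'g \<Rightarrow> 'a) \<Rightarrow> ('g \<Rightarrow> 'a) \<times> ('g \<Rightarrow> 'g \<Rightarrow> 'a) \<Rightarrow> ('g \<Rightarrow> 'a) \<times> ('g \<Rightarrow> 'g \<Rightarrow> 'a)" where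
  "D1_mult R G p q =
    (let (a1, b1) = p; (a2, b2) = q; RG = group_ring R G;
         ab = (\<lambda>g h. if g \<in> carrier G \<and> h \<in> carrier G then
                 finsum R (\<lambda>t. a1 t \<otimes>\<^bsub>R\<^esub> b2 (g \<otimes>\<^bsub>G\<^esub> t) (inv\<^bsub>G\<^esub> t \<otimes>\<^bsub>G\<^esub> h)) (gsupp R G a1)
               else \<zero>\<^bsub>R\<^esub>);
         ba = (\<lambda>g h. if g \<in> carrier G \<and> h \<in> carrier G then
                 finsum R (\<lambda>t. b1 g t \<otimes>\<^bsub>R\<^esub> a2 (inv\<^bsub>G\<^esub> t \<otimes>\<^bsub>G\<^esub> h)) (gsupp R G (b1 g))
               else \<zero>\<^bsub>R\<^esub>);
         bb = (\<lambda>g h. if g \<in> carrier G \<and> h \<in> carrier G then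
                 finsum R (\<lambda>t. b1 g t \<otimes>\<^bsub>R\<^esub> b2 (g \<otimes>\<^bsub>G\<^esub> t) (inv\<^bsub>G\<^esub> t \<otimes>\<^bsub>G\<^esub> h)) (gsupp R G (b1 g))
               else \<zero>\<^bsub>R\<^esub>)
     in (a1 \<otimes>\<^bsub>RG\<^esub> a2,
         (\<lambda>g h. if g \<in> carrier G \<and> h \<in> carrier G then ab g h \<oplus>\<^bsub>R\<^esub> ba g h \<oplus>\<^bsub>R\<^esub> bb g h
                else \<zero>\<^bsub>R\<^esub>)))"

definition D1 :: "('a, 'm) ring_scheme \<Rightarrow> 'g monoid \<Rightarrow> (('g \<Rightarrow> 'a) \<times> ('g \<Rightarrow> 'g \<Rightarrow> 'a)) ring" where
  "D1 R G =
    \<lparr> carrier = carrier (group_ring R G) \<times> carrier (group_ring (group_ring R G) G),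
      mult = D1_mult R G,
      one = (\<one>\<^bsub>group_ring R G\<^esub>, \<zero>\<^bsub>group_ring (group_ring R G) G\<^esub>),
      zero = (\<zero>\<^bsub>group_ring R G\<^esub>, \<zero>\<^bsub>group_ring (group_ring R G) G\<^esub>),
      add = (\<lambda>(a1, b1) (a2, b2). (a1 \<oplus>\<^bsub>group_ring R G\<^esub> a2, b1 \<oplus>\<^bsub>group_ring (group_ring R G) G\<^esub> b2)) \<rparr>"

definition matrix_ring :: "nat \<Rightarrow> ('b, 'm) ring_scheme \<Rightarrow> (nat \<Rightarrow> nat \<Rightarrow> 'b) ring" where
  "matrix_ring n A =
    \<lparr> carrier = {M. (\<forall>i<n. \<forall>j<n. M i j \<in> carrier A) \<and> (\<forall>i j. \<not> (i < n \<and> j < n) \<longrightarrow> M i j = \<zero>\<^bsub>A\<^esub>)},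
      mult = (\<lambda>M N i j. if i < n \<and> j < n then finsum A (\<lambda>l. M i l \<otimes>\<^bsub>A\<^esub> N l j) {..<n} else \<zero>\<^bsub>A\<^esub>),
      one = (\<lambda>i j. if i < n \<and> j < n \<and> i = j then \<one>\<^bsub>A\<^esub> else \<zero>\<^bsub>A\<^esub>),
      zero = (\<lambda>i j. \<zero>\<^bsub>A\<^esub>),
      add = (\<lambda>M N i j. if i < n \<and> j < n then M i j \<oplus>\<^bsub>A\<^esub> N i j else \<zero>\<^bsub>A\<^esub>) \<rparr>"

definition D1_matrix_canon ::
  "(('g \<Rightarrow> nat \<Rightarrow> nat \<Rightarrow> 'a) \<times> ('g \<Rightarrow> 'g \<Rightarrow> nat \<Rightarrow> nat \<Rightarrow> 'a))
     \<Rightarrow> nat \<Rightarrow> nat \<Rightarrow> ('g \<Rightarrow> 'a) \<times> ('g \<Rightarrow> 'g \<Rightarrow> 'a)" where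
  "D1_matrix_canon p = (\<lambda>i j. ((\<lambda>g. fst p g i j), (\<lambda>g h. snd p g h i j)))"

end

theory Submission
  imports Defs
begin

(* The canonical map only re-indexes: (alpha, beta) goes to the matrix whose (i, j) entry is
   (alpha_ij, beta_ij), where alpha_ij and beta_ij collect the (i, j) entries of the values of
   alpha and beta.  It is additive and unital by inspection, and bijective because a
   matrix-valued map on G has finite support iff each of its n^2 entries has.

   The content is multiplicativity.  For f in R[G] and a family Y of elements of R[G], put
   (f * Y)(h) = sum_t f(t) Y_t(t^-1 h).  The product of R[G] is the case of a constant family,
   and each of the three summands alpha beta, beta alpha, beta beta of the product of D^1 is of
   this form.  For matrix-valued f and Y, exchanging the finite sums over t and over the inner
   matrix index l shows that the (i, j) entry of f * Y is sum_l f_il * Y_lj, which is exactly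
   the (i, j) entry of the product in M_n(D^1(k[G])). *)

section \<open>Group rings\<close>

lemma carrier_group_ring:
  "f \<in> carrier (group_ring R G) \<longleftrightarrow>
     (\<forall>g\<in>carrier G. f g \<in> carrier R) \<and> (\<forall>g. g \<notin> carrier G \<longrightarrow> f g = \<zero>\<^bsub>R\<^esub>) \<and>
     finite (gsupp R G f)"
  by (simp add: group_ring_def)

lemma group_ring_simps:
  "\<zero>\<^bsub>group_ring R G\<^esub> = (\<lambda>x. \<zero>\<^bsub>R\<^esub>)"
  "\<one>\<^bsub>group_ring R G\<^esub> = (\<lambda>x. if x = \<one>\<^bsub>G\<^esub> then \<one>\<^bsub>R\<^esub> else \<zero>\<^bsub>R\<^esub>)"
  "f \<oplus>\<^bsub>group_ring R G\<^esub> f' = (\<lambda>x. if x \<in> carrier G then f x \<oplus>\<^bsub>R\<^esub> f' x else \<zero>\<^bsub>R\<^esub>)"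
  by (simp_all add: group_ring_def)

lemma group_ring_apply_closed:
  assumes "abelian_monoid R" and "f \<in> carrier (group_ring R G)"
  shows "f x \<in> carrier R"
  using assms abelian_monoid.zero_closed[OF assms(1)]
  by (cases "x \<in> carrier G") (auto simp: carrier_group_ring)

lemma abelian_monoid_group_ring:
  assumes "abelian_monoid R"
  shows "abelian_monoid (group_ring R G)"
proof -
  interpret abelian_monoid R by fact
  have "f \<oplus>\<^bsub>group_ring R G\<^esub> f' \<in> carrier (group_ring R G)"
    if f: "f \<in> carrier (group_ring R G)" and f': "f' \<in> carrier (group_ring R G)" for f f'
  proof -
    have "gsupp R G (f \<oplus>\<^bsub>group_ring R G\<^esub> f') \<subseteq> gsupp R G f \<union> gsupp R G f'"
      using f f' by (auto simp: carrier_group_ring group_ring_simps gsupp_def)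
    then show ?thesis
      using f f' by (auto simp: carrier_group_ring group_ring_simps intro: finite_subset)
  qed
  then show ?thesis
    by (intro abelian_monoidI)
       (auto simp: carrier_group_ring group_ring_simps gsupp_def a_ac fun_eq_iff)
qed

lemma finsum_additive_map:
  assumes R: "abelian_monoid R" and S: "abelian_monoid S"
    and "finite A" and "F \<in> A \<rightarrow> carrier R"
    and closed: "\<And>x. x \<in> carrier R \<Longrightarrow> \<phi> x \<in> carrier S"
    and add: "\<And>x y. x \<in> carrier R \<Longrightarrow> y \<in> carrier R \<Longrightarrow> \<phi> (x \<oplus>\<^bsub>R\<^esub> y) = \<phi> x \<oplus>\<^bsub>S\<^esub> \<phi> y"
    and zero: "\<phi> \<zero>\<^bsub>R\<^esub> = \<zero>\<^bsub>S\<^esub>"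
  shows "\<phi> (finsum R F A) = finsum S (\<lambda>l. \<phi> (F l)) A"
  using assms(3,4)
proof (induction A rule: finite_induct)
  case empty
  interpret R: abelian_monoid R by fact
  interpret S: abelian_monoid S by fact
  show ?case by (simp add: zero)
next
  case (insert a A)
  interpret R: abelian_monoid R by fact
  interpret S: abelian_monoid S by fact
  from insert show ?case
    by (simp add: R.finsum_insert S.finsum_insert R.finsum_closed add closed Pi_iff)
qed

lemma finsum_group_ring_apply:
  assumes "abelian_monoid R" and "finite A" and "F \<in> A \<rightarrow> carrier (group_ring R G)"
  shows "finsum (group_ring R G) F A x = finsum R (\<lambda>l. F l x) A"
proof -
  interpret abelian_monoid R by fact
  have add: "(f \<oplus>\<^bsub>group_ring R G\<^esub> f') x = f x \<oplus>\<^bsub>R\<^esub> f' x"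
    if "f \<in> carrier (group_ring R G)" and "f' \<in> carrier (group_ring R G)" for f f'
    using that by (cases "x \<in> carrier G") (simp_all add: group_ring_simps carrier_group_ring)
  show ?thesis
    by (rule finsum_additive_map[where \<phi> = "\<lambda>f. f x", OF abelian_monoid_group_ring assms])
       (use add group_ring_apply_closed[OF assms(1)] in
         \<open>simp_all add: abelian_monoid_axioms group_ring_simps\<close>)
qed

section \<open>Twisted convolution\<close>

definition twisted_conv ::
    "('a, 'm) ring_scheme \<Rightarrow> 'g monoid \<Rightarrow> ('g \<Rightarrow> 'a) \<Rightarrow> ('g \<Rightarrow> 'g \<Rightarrow> 'a) \<Rightarrow> 'g \<Rightarrow> 'a" where
  "twisted_conv R G f Y h =
    (if h \<in> carrier G
     then finsum R (\<lambda>t. f t \<otimes>\<^bsub>R\<^esub> Y t (inv\<^bsub>G\<^esub> t \<otimes>\<^bsub>G\<^esub> h)) (gsupp R G f)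
     else \<zero>\<^bsub>R\<^esub>)"

lemma group_ring_mult_eq_twisted_conv:
  "f \<otimes>\<^bsub>group_ring R G\<^esub> f' = twisted_conv R G f (\<lambda>_. f')"
  by (simp add: group_ring_def twisted_conv_def fun_eq_iff)

lemma D1_mult_eq_twisted_conv:
  "D1_mult R G (a1, b1) (a2, b2) =
    (twisted_conv R G a1 (\<lambda>_. a2),
     \<lambda>g. if g \<in> carrier G
          then twisted_conv R G a1 (\<lambda>t. b2 (g \<otimes>\<^bsub>G\<^esub> t)) \<oplus>\<^bsub>group_ring R G\<^esub>
               twisted_conv R G (b1 g) (\<lambda>_. a2) \<oplus>\<^bsub>group_ring R G\<^esub>
               twisted_conv R G (b1 g) (\<lambda>t. b2 (g \<otimes>\<^bsub>G\<^esub> t))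
          else \<zero>\<^bsub>group_ring R G\<^esub>)"
  unfolding D1_mult_def Let_def group_ring_mult_eq_twisted_conv
  by (intro prod_eqI ext) (simp_all add: group_ring_simps twisted_conv_def)

lemma (in abelian_monoid) finsum_neq_zeroD:
  assumes "finsum G f A \<noteq> \<zero>"
  shows "\<exists>a\<in>A. f a \<noteq> \<zero>"
proof (rule ccontr)
  assume "\<not> (\<exists>a\<in>A. f a \<noteq> \<zero>)"
  then have "finsum G f A = finsum G (\<lambda>_. \<zero>) A"
    by (intro finsum_cong) auto
  with assms show False by simp
qed

lemma twisted_conv_apply_closed:
  assumes "abelian_monoid R"
    and "\<And>t. t \<in> gsupp R G f \<Longrightarrow> f t \<otimes>\<^bsub>R\<^esub> Y t (inv\<^bsub>G\<^esub> t \<otimes>\<^bsub>G\<^esub> h) \<in> carrier R"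
  shows "twisted_conv R G f Y h \<in> carrier R"
  using assms abelian_monoid.zero_closed[OF assms(1)]
  by (auto simp: twisted_conv_def intro: abelian_monoid.finsum_closed)

lemma gsupp_twisted_conv:
  assumes "ring R" and "group G" and f: "\<And>t. f t \<in> carrier R"
  shows "gsupp R G (twisted_conv R G f Y) \<subseteq> (\<Union>t\<in>gsupp R G f. (\<lambda>s. t \<otimes>\<^bsub>G\<^esub> s) ` gsupp R G (Y t))"
proof
  interpret R: ring R by fact
  interpret G: group G by fact
  fix h assume "h \<in> gsupp R G (twisted_conv R G f Y)"
  then have h: "h \<in> carrier G"
    and "finsum R (\<lambda>t. f t \<otimes>\<^bsub>R\<^esub> Y t (inv\<^bsub>G\<^esub> t \<otimes>\<^bsub>G\<^esub> h)) (gsupp R G f) \<noteq> \<zero>\<^bsub>R\<^esub>"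
    by (auto simp: gsupp_def twisted_conv_def)
  then obtain t where t: "t \<in> gsupp R G f"
    and "f t \<otimes>\<^bsub>R\<^esub> Y t (inv\<^bsub>G\<^esub> t \<otimes>\<^bsub>G\<^esub> h) \<noteq> \<zero>\<^bsub>R\<^esub>"
    using R.finsum_neq_zeroD by blast
  then have "Y t (inv\<^bsub>G\<^esub> t \<otimes>\<^bsub>G\<^esub> h) \<noteq> \<zero>\<^bsub>R\<^esub>"
    using R.r_null[OF f] by force
  then have "inv\<^bsub>G\<^esub> t \<otimes>\<^bsub>G\<^esub> h \<in> gsupp R G (Y t)"
    using t h by (simp add: gsupp_def)
  moreover have "h = t \<otimes>\<^bsub>G\<^esub> (inv\<^bsub>G\<^esub> t \<otimes>\<^bsub>G\<^esub> h)"
    using t h by (simp add: gsupp_def G.m_assoc[symmetric])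
  ultimately show "h \<in> (\<Union>t\<in>gsupp R G f. (\<lambda>s. t \<otimes>\<^bsub>G\<^esub> s) ` gsupp R G (Y t))"
    using t by blast
qed

lemma twisted_conv_closed:
  assumes R: "ring R" and G: "group G" and f: "f \<in> carrier (group_ring R G)"
    and Y: "\<And>t. Y t \<in> carrier (group_ring R G)"
  shows "twisted_conv R G f Y \<in> carrier (group_ring R G)"
proof -
  interpret R: ring R by fact
  have f_val: "f t \<in> carrier R" for t
    using f by (rule group_ring_apply_closed[OF R.abelian_monoid_axioms])
  have Y_val: "Y t x \<in> carrier R" for t x
    using Y by (rule group_ring_apply_closed[OF R.abelian_monoid_axioms])
  have "finite (\<Union>t\<in>gsupp R G f. (\<lambda>s. t \<otimes>\<^bsub>G\<^esub> s) ` gsupp R G (Y t))"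
    using f Y by (simp add: carrier_group_ring)
  then have "finite (gsupp R G (twisted_conv R G f Y))"
    by (rule finite_subset[OF gsupp_twisted_conv[OF R G f_val]])
  moreover have "twisted_conv R G f Y h \<in> carrier R" for h
    by (rule twisted_conv_apply_closed[OF R.abelian_monoid_axioms R.m_closed[OF f_val Y_val]])
  moreover have "twisted_conv R G f Y h = \<zero>\<^bsub>R\<^esub>" if "h \<notin> carrier G" for h
    using that by (simp add: twisted_conv_def)
  ultimately show ?thesis
    unfolding carrier_group_ring by blast
qed

lemma twisted_conv_neq_zeroD:
  assumes R: "ring R" and G: "group G" and f: "f \<in> carrier (group_ring R G)"
    and "twisted_conv R G f Y \<noteq> \<zero>\<^bsub>group_ring R G\<^esub>"
  shows "\<exists>t\<in>gsupp R G f. Y t \<noteq> \<zero>\<^bsub>group_ring R G\<^esub>"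
proof -
  interpret R: ring R by fact
  have f_val: "f t \<in> carrier R" for t
    using f by (rule group_ring_apply_closed[OF R.abelian_monoid_axioms])
  obtain h where "twisted_conv R G f Y h \<noteq> \<zero>\<^bsub>R\<^esub>"
    using assms(4) by (auto simp: group_ring_simps fun_eq_iff)
  then have "h \<in> gsupp R G (twisted_conv R G f Y)"
    by (cases "h \<in> carrier G") (simp_all add: gsupp_def twisted_conv_def)
  then obtain t s where "t \<in> gsupp R G f" and "s \<in> gsupp R G (Y t)"
    using gsupp_twisted_conv[where f = f and Y = Y, OF R G f_val] by blast
  then show ?thesis
    by (auto simp: gsupp_def group_ring_simps fun_eq_iff)
qed

section \<open>The ring D^1\<close>

lemma carrier_D1:
  "p \<in> carrier (D1 R G) \<longleftrightarrow>
     fst p \<in> carrier (group_ring R G) \<and> snd p \<in> carrier (group_ring (group_ring R G) G)"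
  by (cases p) (simp add: D1_def)

lemma D1_simps:
  "\<zero>\<^bsub>D1 R G\<^esub> = (\<zero>\<^bsub>group_ring R G\<^esub>, \<zero>\<^bsub>group_ring (group_ring R G) G\<^esub>)"
  "\<one>\<^bsub>D1 R G\<^esub> = (\<one>\<^bsub>group_ring R G\<^esub>, \<zero>\<^bsub>group_ring (group_ring R G) G\<^esub>)"
  "p \<oplus>\<^bsub>D1 R G\<^esub> q =
     (fst p \<oplus>\<^bsub>group_ring R G\<^esub> fst q, snd p \<oplus>\<^bsub>group_ring (group_ring R G) G\<^esub> snd q)"
  "p \<otimes>\<^bsub>D1 R G\<^esub> q = D1_mult R G p q"
  by (simp_all add: D1_def split: prod.splits)

lemma abelian_monoid_D1:
  assumes "abelian_monoid R"
  shows "abelian_monoid (D1 R G)"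
proof -
  interpret A: abelian_monoid "group_ring R G"
    by (rule abelian_monoid_group_ring) fact
  interpret B: abelian_monoid "group_ring (group_ring R G) G"
    by (rule abelian_monoid_group_ring) (rule abelian_monoid_group_ring, fact)
  show ?thesis
    by (rule abelian_monoidI) (auto simp: carrier_D1 D1_simps A.a_ac B.a_ac prod_eq_iff)
qed

lemma finsum_D1_apply:
  assumes "abelian_monoid R" and "finite A" and F: "F \<in> A \<rightarrow> carrier (D1 R G)"
  shows "fst (finsum (D1 R G) F A) g = finsum R (\<lambda>l. fst (F l) g) A"
    and "snd (finsum (D1 R G) F A) g h = finsum R (\<lambda>l. snd (F l) g h) A"
proof -
  have RG: "abelian_monoid (group_ring R G)"
    using assms(1) by (rule abelian_monoid_group_ring)
  then have RGG: "abelian_monoid (group_ring (group_ring R G) G)"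
    by (rule abelian_monoid_group_ring)
  have D1: "abelian_monoid (D1 R G)"
    using assms(1) by (rule abelian_monoid_D1)
  have F_fst: "(\<lambda>l. fst (F l)) \<in> A \<rightarrow> carrier (group_ring R G)"
    and F_snd: "(\<lambda>l. snd (F l)) \<in> A \<rightarrow> carrier (group_ring (group_ring R G) G)"
    using F by (auto simp: carrier_D1)
  have "fst (finsum (D1 R G) F A) = finsum (group_ring R G) (\<lambda>l. fst (F l)) A"
    by (rule finsum_additive_map[OF D1 RG assms(2,3)]) (auto simp: carrier_D1 D1_simps)
  then show "fst (finsum (D1 R G) F A) g = finsum R (\<lambda>l. fst (F l) g) A"
    by (simp add: finsum_group_ring_apply[OF assms(1,2) F_fst])
  have "snd (finsum (D1 R G) F A) = finsum (group_ring (group_ring R G) G) (\<lambda>l. snd (F l)) A"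
    by (rule finsum_additive_map[OF D1 RGG assms(2,3)]) (auto simp: carrier_D1 D1_simps)
  moreover have "(\<lambda>l. snd (F l) g) \<in> A \<rightarrow> carrier (group_ring R G)"
    using F_snd by (auto intro: group_ring_apply_closed[OF RG])
  ultimately show "snd (finsum (D1 R G) F A) g h = finsum R (\<lambda>l. snd (F l) g h) A"
    by (simp add: finsum_group_ring_apply[OF RG assms(2) F_snd]
        finsum_group_ring_apply[OF assms(1,2)])
qed

lemma gsupp_snd_D1_mult:
  assumes R: "ring R" and G: "group G"
    and a1: "a1 \<in> carrier (group_ring R G)" and b1: "b1 \<in> carrier (group_ring (group_ring R G) G)"
  shows "gsupp (group_ring R G) G (snd (D1_mult R G (a1, b1) (a2, b2))) \<subseteq>
    (\<lambda>(s, t). s \<otimes>\<^bsub>G\<^esub> inv\<^bsub>G\<^esub> t) ` (gsupp (group_ring R G) G b2 \<times> gsupp R G a1) \<union>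
    gsupp (group_ring R G) G b1"
proof
  interpret R: ring R by fact
  interpret G: group G by fact
  let ?RG = "group_ring R G"
  interpret RG: abelian_monoid ?RG
    by (rule abelian_monoid_group_ring) unfold_locales
  have b1_slice: "b1 g \<in> carrier ?RG" for g
    using b1 by (rule group_ring_apply_closed[OF RG.abelian_monoid_axioms])
  fix g assume "g \<in> gsupp ?RG G (snd (D1_mult R G (a1, b1) (a2, b2)))"
  then have g: "g \<in> carrier G"
    and "twisted_conv R G a1 (\<lambda>t. b2 (g \<otimes>\<^bsub>G\<^esub> t)) \<oplus>\<^bsub>?RG\<^esub> twisted_conv R G (b1 g) (\<lambda>_. a2)
      \<oplus>\<^bsub>?RG\<^esub> twisted_conv R G (b1 g) (\<lambda>t. b2 (g \<otimes>\<^bsub>G\<^esub> t)) \<noteq> \<zero>\<^bsub>?RG\<^esub>"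
    by (auto simp: gsupp_def D1_mult_eq_twisted_conv split: if_splits)
  then consider "twisted_conv R G a1 (\<lambda>t. b2 (g \<otimes>\<^bsub>G\<^esub> t)) \<noteq> \<zero>\<^bsub>?RG\<^esub>"
    | "twisted_conv R G (b1 g) (\<lambda>_. a2) \<noteq> \<zero>\<^bsub>?RG\<^esub> \<or>
       twisted_conv R G (b1 g) (\<lambda>t. b2 (g \<otimes>\<^bsub>G\<^esub> t)) \<noteq> \<zero>\<^bsub>?RG\<^esub>"
    by (metis RG.l_zero RG.zero_closed)
  then show "g \<in> (\<lambda>(s, t). s \<otimes>\<^bsub>G\<^esub> inv\<^bsub>G\<^esub> t) ` (gsupp ?RG G b2 \<times> gsupp R G a1) \<union> gsupp ?RG G b1"
  proof cases
    case 1
    then obtain t where t: "t \<in> gsupp R G a1" and "b2 (g \<otimes>\<^bsub>G\<^esub> t) \<noteq> \<zero>\<^bsub>?RG\<^esub>"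
      using twisted_conv_neq_zeroD[OF R G a1] by blast
    then have "g \<otimes>\<^bsub>G\<^esub> t \<in> gsupp ?RG G b2"
      using g by (auto simp: gsupp_def)
    moreover have "g = (g \<otimes>\<^bsub>G\<^esub> t) \<otimes>\<^bsub>G\<^esub> inv\<^bsub>G\<^esub> t"
      using t g by (simp add: gsupp_def G.m_assoc)
    ultimately show ?thesis
      using t by (intro UnI1 image_eqI[where x = "(g \<otimes>\<^bsub>G\<^esub> t, t)"]) auto
  next
    case 2
    then have "gsupp R G (b1 g) \<noteq> {}"
      using twisted_conv_neq_zeroD[OF R G b1_slice] by blast
    then show ?thesis
      using g by (auto simp: gsupp_def group_ring_simps)
  qed
qed

lemma D1_mult_closed:
  assumes R: "ring R" and G: "group G"
    and p: "p \<in> carrier (D1 R G)" and q: "q \<in> carrier (D1 R G)"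
  shows "p \<otimes>\<^bsub>D1 R G\<^esub> q \<in> carrier (D1 R G)"
proof -
  interpret R: ring R by fact
  let ?RG = "group_ring R G"
  interpret RG: abelian_monoid ?RG
    by (rule abelian_monoid_group_ring) unfold_locales
  obtain a1 b1 a2 b2 where pq: "p = (a1, b1)" "q = (a2, b2)"
    by fastforce
  have a1: "a1 \<in> carrier ?RG" and a2: "a2 \<in> carrier ?RG"
    and b1: "b1 \<in> carrier (group_ring ?RG G)" and b2: "b2 \<in> carrier (group_ring ?RG G)"
    using p q by (auto simp: pq carrier_D1)
  have b_slices: "b1 g \<in> carrier ?RG" "b2 g \<in> carrier ?RG" for g
    using b1 b2 by (auto intro: group_ring_apply_closed[OF RG.abelian_monoid_axioms])
  let ?B = "snd (D1_mult R G (a1, b1) (a2, b2))"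
  have "finite (gsupp ?RG G ?B)"
    by (rule finite_subset[OF gsupp_snd_D1_mult[OF R G a1 b1]])
       (use a1 b1 b2 in \<open>simp add: carrier_group_ring\<close>)
  moreover have "?B g \<in> carrier ?RG" for g
    using a1 a2 b_slices
    by (simp add: D1_mult_eq_twisted_conv twisted_conv_closed[OF R G])
  moreover have "?B g = \<zero>\<^bsub>?RG\<^esub>" if "g \<notin> carrier G" for g
    using that by (simp add: D1_mult_eq_twisted_conv)
  ultimately have "?B \<in> carrier (group_ring ?RG G)"
    unfolding carrier_group_ring[of ?B] by blast
  moreover have "fst (D1_mult R G (a1, b1) (a2, b2)) \<in> carrier ?RG"
    using a1 a2 by (simp add: D1_mult_eq_twisted_conv twisted_conv_closed[OF R G])
  ultimately show ?thesis
    by (simp add: pq D1_simps carrier_D1)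
qed

section \<open>Matrix rings\<close>

lemma carrier_matrix_ring:
  "M \<in> carrier (matrix_ring n A) \<longleftrightarrow>
     (\<forall>i<n. \<forall>j<n. M i j \<in> carrier A) \<and> (\<forall>i j. \<not> (i < n \<and> j < n) \<longrightarrow> M i j = \<zero>\<^bsub>A\<^esub>)"
  by (simp add: matrix_ring_def)

lemma matrix_ring_simps:
  "\<zero>\<^bsub>matrix_ring n A\<^esub> = (\<lambda>i j. \<zero>\<^bsub>A\<^esub>)"
  "\<one>\<^bsub>matrix_ring n A\<^esub> = (\<lambda>i j. if i < n \<and> j < n \<and> i = j then \<one>\<^bsub>A\<^esub> else \<zero>\<^bsub>A\<^esub>)"
  "M \<oplus>\<^bsub>matrix_ring n A\<^esub> N = (\<lambda>i j. if i < n \<and> j < n then M i j \<oplus>\<^bsub>A\<^esub> N i j else \<zero>\<^bsub>A\<^esub>)"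
  "M \<otimes>\<^bsub>matrix_ring n A\<^esub> N =
     (\<lambda>i j. if i < n \<and> j < n then finsum A (\<lambda>l. M i l \<otimes>\<^bsub>A\<^esub> N l j) {..<n} else \<zero>\<^bsub>A\<^esub>)"
  by (simp_all add: matrix_ring_def)

lemma matrix_ring_apply_closed:
  assumes "abelian_monoid A" and "M \<in> carrier (matrix_ring n A)"
  shows "M i j \<in> carrier A"
  using assms abelian_monoid.zero_closed[OF assms(1)]
  by (cases "i < n \<and> j < n") (auto simp: carrier_matrix_ring)

lemma abelian_monoid_matrix_ring:
  assumes "abelian_monoid A"
  shows "abelian_monoid (matrix_ring n A)"
proof -
  interpret abelian_monoid A by fact
  show ?thesis
    by (rule abelian_monoidI)
       (auto simp: carrier_matrix_ring matrix_ring_simps a_ac fun_eq_iff)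
qed

lemma finsum_matrix_ring_apply:
  assumes "abelian_monoid A" and "finite S" and "F \<in> S \<rightarrow> carrier (matrix_ring n A)"
  shows "finsum (matrix_ring n A) F S i j = finsum A (\<lambda>l. F l i j) S"
proof -
  interpret abelian_monoid A by fact
  note closed = matrix_ring_apply_closed[OF assms(1), of _ n i j]
  have add: "(M \<oplus>\<^bsub>matrix_ring n A\<^esub> N) i j = M i j \<oplus>\<^bsub>A\<^esub> N i j"
    if "M \<in> carrier (matrix_ring n A)" and "N \<in> carrier (matrix_ring n A)" for M N
  proof (cases "i < n \<and> j < n")
    case False
    then have "M i j = \<zero>\<^bsub>A\<^esub>" and "N i j = \<zero>\<^bsub>A\<^esub>"
      using that by (simp_all add: carrier_matrix_ring)
    with False show ?thesis
      by (simp add: matrix_ring_simps)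
  qed (simp add: matrix_ring_simps)
  show ?thesis
    by (rule finsum_additive_map[where \<phi> = "\<lambda>M. M i j", OF abelian_monoid_matrix_ring assms])
       (use add closed in \<open>simp_all add: abelian_monoid_axioms matrix_ring_simps\<close>)
qed

lemma matrix_ring_mult_closed:
  assumes "ring A" and "M \<in> carrier (matrix_ring n A)" and "N \<in> carrier (matrix_ring n A)"
  shows "M \<otimes>\<^bsub>matrix_ring n A\<^esub> N \<in> carrier (matrix_ring n A)"
proof -
  interpret ring A by fact
  show ?thesis
    using assms(2,3) by (auto simp: carrier_matrix_ring matrix_ring_simps intro!: finsum_closed)
qed

lemma gsupp_matrix_valued:
  assumes "\<And>g i j. \<not> (i < n \<and> j < n) \<Longrightarrow> a g i j = \<zero>\<^bsub>A\<^esub>"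
  shows "gsupp (matrix_ring n A) G a = (\<Union>i<n. \<Union>j<n. gsupp A G (\<lambda>g. a g i j))"
proof -
  have "a g i j \<noteq> \<zero>\<^bsub>A\<^esub> \<Longrightarrow> i < n \<and> j < n" for g i j
    using assms by blast
  then show ?thesis
    by (auto simp: gsupp_def matrix_ring_simps fun_eq_iff; blast)
qed

lemma carrier_group_ring_matrix_iff:
  "(\<lambda>i j g. a g i j) \<in> carrier (matrix_ring n (group_ring A G)) \<longleftrightarrow>
     a \<in> carrier (group_ring (matrix_ring n A) G)"
proof -
  let ?off = "\<forall>g i j. \<not> (i < n \<and> j < n) \<longrightarrow> a g i j = \<zero>\<^bsub>A\<^esub>"
  have lhs: "(\<lambda>i j g. a g i j) \<in> carrier (matrix_ring n (group_ring A G)) \<longleftrightarrow>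
      ?off \<and> (\<forall>i<n. \<forall>j<n. (\<lambda>g. a g i j) \<in> carrier (group_ring A G))"
    by (auto simp: carrier_matrix_ring group_ring_simps fun_eq_iff)
  have rhs: "a \<in> carrier (group_ring (matrix_ring n A) G) \<longleftrightarrow>
      ?off \<and> (\<forall>g\<in>carrier G. \<forall>i<n. \<forall>j<n. a g i j \<in> carrier A) \<and>
      (\<forall>g i j. g \<notin> carrier G \<longrightarrow> a g i j = \<zero>\<^bsub>A\<^esub>) \<and> finite (gsupp (matrix_ring n A) G a)"
    by (auto simp: carrier_group_ring carrier_matrix_ring matrix_ring_simps fun_eq_iff; blast)
  show ?thesis
  proof (cases ?off)
    case True
    then have "gsupp (matrix_ring n A) G a = (\<Union>i<n. \<Union>j<n. gsupp A G (\<lambda>g. a g i j))"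
      by (intro gsupp_matrix_valued) blast
    with True show ?thesis
      unfolding lhs rhs by (auto simp: carrier_group_ring; blast)
  qed (unfold lhs rhs, blast)
qed

lemma carrier_group_ring_transfer:
  assumes "\<And>x. \<phi> x \<in> carrier S \<longleftrightarrow> x \<in> carrier R" and "\<And>x. \<phi> x = \<zero>\<^bsub>S\<^esub> \<longleftrightarrow> x = \<zero>\<^bsub>R\<^esub>"
  shows "(\<lambda>g. \<phi> (f g)) \<in> carrier (group_ring S G) \<longleftrightarrow> f \<in> carrier (group_ring R G)"
  using assms by (simp add: carrier_group_ring gsupp_def)

lemma (in abelian_monoid) finsum_swap:
  assumes "finite A" and "finite B" and "\<And>a b. a \<in> A \<Longrightarrow> b \<in> B \<Longrightarrow> f a b \<in> carrier G"
  shows "finsum G (\<lambda>a. finsum G (\<lambda>b. f a b) B) A = finsum G (\<lambda>b. finsum G (\<lambda>a. f a b) A) B"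
  using assms(1,3)
proof (induction A rule: finite_induct)
  case (insert x A)
  have "finsum G (\<lambda>a. finsum G (\<lambda>b. f a b) B) (insert x A) =
      finsum G (\<lambda>b. f x b) B \<oplus> finsum G (\<lambda>a. finsum G (\<lambda>b. f a b) B) A"
    using insert by (intro finsum_insert) (auto intro!: finsum_closed)
  also have "\<dots> = finsum G (\<lambda>b. f x b \<oplus> finsum G (\<lambda>a. f a b) A) B"
    using insert by (subst finsum_addf) (auto intro!: finsum_closed)
  also have "\<dots> = finsum G (\<lambda>b. finsum G (\<lambda>a. f a b) (insert x A)) B"
    using insert by (intro finsum_cong) (auto intro!: finsum_closed)
  finally show ?case .
qed simp

lemma finsum_gsupp_superset:
  assumes "ring R" and "finite S" and "gsupp R G f \<subseteq> S" and "S \<subseteq> carrier G"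
    and "\<And>t. f t \<in> carrier R" and "\<And>t. y t \<in> carrier R"
  shows "finsum R (\<lambda>t. f t \<otimes>\<^bsub>R\<^esub> y t) S = finsum R (\<lambda>t. f t \<otimes>\<^bsub>R\<^esub> y t) (gsupp R G f)"
proof -
  interpret ring R by fact
  show ?thesis
    by (rule add.finprod_mono_neutral_cong_right) (use assms in \<open>auto simp: gsupp_def\<close>)
qed

lemma twisted_conv_matrix_entry:
  assumes A: "ring A" and f: "f \<in> carrier (group_ring (matrix_ring n A) G)"
    and Y: "\<And>t x. Y t x \<in> carrier (matrix_ring n A)" and i: "i < n" and j: "j < n"
  shows "twisted_conv (matrix_ring n A) G f Y h i j =
    finsum A (\<lambda>l. twisted_conv A G (\<lambda>g. f g i l) (\<lambda>t x. Y t x l j) h) {..<n}"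
proof (cases "h \<in> carrier G")
  case False
  interpret ring A by fact
  from False show ?thesis
    by (simp add: twisted_conv_def matrix_ring_simps)
next
  case True
  interpret ring A by fact
  let ?M = "matrix_ring n A"
  let ?S = "gsupp ?M G f"
  let ?y = "\<lambda>t l. Y t (inv\<^bsub>G\<^esub> t \<otimes>\<^bsub>G\<^esub> h) l j"
  have f_val: "f t \<in> carrier ?M" for t
    using f by (rule group_ring_apply_closed[OF abelian_monoid_matrix_ring[OF abelian_monoid_axioms]])
  have f_entry: "f t i l \<in> carrier A" if "l < n" for t l
    using f_val[of t] i that by (simp add: carrier_matrix_ring)
  have y_entry: "?y t l \<in> carrier A" if "l < n" for t l
    using Y j that by (simp add: carrier_matrix_ring)
  have fin: "finite ?S"
    using f by (simp add: carrier_group_ring)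
  have "twisted_conv ?M G f Y h i j = finsum A (\<lambda>t. (f t \<otimes>\<^bsub>?M\<^esub> Y t (inv\<^bsub>G\<^esub> t \<otimes>\<^bsub>G\<^esub> h)) i j) ?S"
    using True f_val Y
    by (simp add: twisted_conv_def finsum_matrix_ring_apply[OF abelian_monoid_axioms fin]
        matrix_ring_mult_closed[OF A] Pi_iff)
  also have "\<dots> = finsum A (\<lambda>t. finsum A (\<lambda>l. f t i l \<otimes>\<^bsub>A\<^esub> ?y t l) {..<n}) ?S"
    using i j by (simp add: matrix_ring_simps)
  also have "\<dots> = finsum A (\<lambda>l. finsum A (\<lambda>t. f t i l \<otimes>\<^bsub>A\<^esub> ?y t l) ?S) {..<n}"
    using fin f_entry y_entry by (intro finsum_swap) auto
  also have "\<dots> = finsum A (\<lambda>l. finsum A (\<lambda>t. f t i l \<otimes>\<^bsub>A\<^esub> ?y t l) (gsupp A G (\<lambda>g. f g i l))) {..<n}"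
    using fin f_entry y_entry
    by (intro finsum_cong' refl finsum_gsupp_superset[OF A] finsum_closed)
       (auto simp: gsupp_def matrix_ring_simps)
  also have "\<dots> = finsum A (\<lambda>l. twisted_conv A G (\<lambda>g. f g i l) (\<lambda>t x. Y t x l j) h) {..<n}"
    using True by (simp add: twisted_conv_def)
  finally show ?thesis .
qed

lemma twisted_conv_matrix_entry_outside:
  assumes A: "ring A" and "\<And>t. f t \<in> carrier (matrix_ring n A)"
    and "\<And>t x. Y t x \<in> carrier (matrix_ring n A)" and "\<not> (i < n \<and> j < n)"
  shows "twisted_conv (matrix_ring n A) G f Y h i j = \<zero>\<^bsub>A\<^esub>"
proof -
  interpret ring A by fact
  have "twisted_conv (matrix_ring n A) G f Y h \<in> carrier (matrix_ring n A)"
    using assms(2,3)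
    by (intro twisted_conv_apply_closed abelian_monoid_matrix_ring abelian_monoid_axioms
        matrix_ring_mult_closed[OF A])
  with assms(4) show ?thesis
    by (simp add: carrier_matrix_ring)
qed

section \<open>The canonical map\<close>

lemma carrier_matrix_ring_D1:
  "P \<in> carrier (matrix_ring n (D1 R G)) \<longleftrightarrow>
     (\<lambda>i j. fst (P i j)) \<in> carrier (matrix_ring n (group_ring R G)) \<and>
     (\<lambda>i j. snd (P i j)) \<in> carrier (matrix_ring n (group_ring (group_ring R G) G))"
  by (auto simp: carrier_matrix_ring carrier_D1 D1_simps prod_eq_iff)

lemma D1_matrix_canon_carrier_iff:
  "D1_matrix_canon p \<in> carrier (matrix_ring n (D1 k G)) \<longleftrightarrow> p \<in> carrier (D1 (matrix_ring n k) G)"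
proof -
  have "snd p \<in> carrier (group_ring (group_ring (matrix_ring n k) G) G) \<longleftrightarrow>
      (\<lambda>g i j h. snd p g h i j) \<in> carrier (group_ring (matrix_ring n (group_ring k G)) G)"
    by (rule carrier_group_ring_transfer[where \<phi> = "\<lambda>x i j h. x h i j", symmetric])
       (auto simp: carrier_group_ring_matrix_iff group_ring_simps matrix_ring_simps fun_eq_iff)
  also have "\<dots> \<longleftrightarrow>
      (\<lambda>i j g h. snd p g h i j) \<in> carrier (matrix_ring n (group_ring (group_ring k G) G))"
    by (rule carrier_group_ring_matrix_iff[symmetric])
  finally show ?thesis
    by (simp add: carrier_matrix_ring_D1 D1_matrix_canon_def carrier_D1
        carrier_group_ring_matrix_iff)
qed

context
  fixes k :: "('a, 'm) ring_scheme" and G :: "'g monoid" and n :: nat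
    and a1 a2 :: "'g \<Rightarrow> nat \<Rightarrow> nat \<Rightarrow> 'a" and b1 b2 :: "'g \<Rightarrow> 'g \<Rightarrow> nat \<Rightarrow> nat \<Rightarrow> 'a"
  assumes k: "ring k" and G: "group G"
    and a1: "a1 \<in> carrier (group_ring (matrix_ring n k) G)"
    and a2: "a2 \<in> carrier (group_ring (matrix_ring n k) G)"
    and b1: "b1 \<in> carrier (group_ring (group_ring (matrix_ring n k) G) G)"
    and b2: "b2 \<in> carrier (group_ring (group_ring (matrix_ring n k) G) G)"
begin

lemma D1_components_closed:
  "a1 t \<in> carrier (matrix_ring n k)" "a2 t \<in> carrier (matrix_ring n k)"
  "b1 g \<in> carrier (group_ring (matrix_ring n k) G)"
  "b1 g t \<in> carrier (matrix_ring n k)" "b2 g t \<in> carrier (matrix_ring n k)"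
proof -
  interpret ring k by (rule k)
  have M: "abelian_monoid (matrix_ring n k)"
    by (rule abelian_monoid_matrix_ring) (rule abelian_monoid_axioms)
  show "a1 t \<in> carrier (matrix_ring n k)" "a2 t \<in> carrier (matrix_ring n k)"
    using a1 a2 by (simp_all add: group_ring_apply_closed[OF M])
  show "b1 g \<in> carrier (group_ring (matrix_ring n k) G)"
    using b1 by (rule group_ring_apply_closed[OF abelian_monoid_group_ring[OF M]])
  then show "b1 g t \<in> carrier (matrix_ring n k)"
    by (rule group_ring_apply_closed[OF M])
  show "b2 g t \<in> carrier (matrix_ring n k)"
    using b2 by (intro group_ring_apply_closed[OF M] group_ring_apply_closed[OF abelian_monoid_group_ring[OF M]])
qed

lemma D1_component_entries_closed:
  "a1 t i j \<in> carrier k" "a2 t i j \<in> carrier k" "b1 g t i j \<in> carrier k" "b2 g t i j \<in> carrier k"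
proof -
  interpret ring k by (rule k)
  show "a1 t i j \<in> carrier k" "a2 t i j \<in> carrier k" "b1 g t i j \<in> carrier k" "b2 g t i j \<in> carrier k"
    by (rule matrix_ring_apply_closed[OF abelian_monoid_axioms D1_components_closed(1)],
        rule matrix_ring_apply_closed[OF abelian_monoid_axioms D1_components_closed(2)],
        rule matrix_ring_apply_closed[OF abelian_monoid_axioms D1_components_closed(4)],
        rule matrix_ring_apply_closed[OF abelian_monoid_axioms D1_components_closed(5)])
qed

lemma fst_D1_matrix_canon_mult:
  assumes "i < n" and "j < n"
  shows "fst (D1_matrix_canon (D1_mult (matrix_ring n k) G (a1, b1) (a2, b2)) i j) g =
    finsum k (\<lambda>l. fst (D1_mult k G (D1_matrix_canon (a1, b1) i l) (D1_matrix_canon (a2, b2) l j)) g)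
      {..<n}"
  using twisted_conv_matrix_entry[where Y = "\<lambda>_. a2", OF k a1 D1_components_closed(2) assms]
  by (simp add: D1_matrix_canon_def D1_mult_eq_twisted_conv)

lemma snd_D1_matrix_canon_mult:
  assumes i: "i < n" and j: "j < n"
  shows "snd (D1_matrix_canon (D1_mult (matrix_ring n k) G (a1, b1) (a2, b2)) i j) g h =
    finsum k (\<lambda>l. snd (D1_mult k G (D1_matrix_canon (a1, b1) i l) (D1_matrix_canon (a2, b2) l j)) g h)
      {..<n}"
proof (cases "g \<in> carrier G \<and> h \<in> carrier G")
  case True
  interpret ring k by (rule k)
  let ?M = "matrix_ring n k"
  let ?ab = "\<lambda>l. twisted_conv k G (\<lambda>t. a1 t i l) (\<lambda>t x. b2 (g \<otimes>\<^bsub>G\<^esub> t) x l j) h"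
  let ?ba = "\<lambda>l. twisted_conv k G (\<lambda>t. b1 g t i l) (\<lambda>t x. a2 x l j) h"
  let ?bb = "\<lambda>l. twisted_conv k G (\<lambda>t. b1 g t i l) (\<lambda>t x. b2 (g \<otimes>\<^bsub>G\<^esub> t) x l j) h"
  have closed: "?ab l \<in> carrier k" "?ba l \<in> carrier k" "?bb l \<in> carrier k" for l
    by (intro twisted_conv_apply_closed abelian_monoid_axioms m_closed D1_component_entries_closed)+
  have "snd (D1_matrix_canon (D1_mult ?M G (a1, b1) (a2, b2)) i j) g h =
      twisted_conv ?M G a1 (\<lambda>t. b2 (g \<otimes>\<^bsub>G\<^esub> t)) h i j \<oplus>\<^bsub>k\<^esub>
      twisted_conv ?M G (b1 g) (\<lambda>_. a2) h i j \<oplus>\<^bsub>k\<^esub>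
      twisted_conv ?M G (b1 g) (\<lambda>t. b2 (g \<otimes>\<^bsub>G\<^esub> t)) h i j"
    using True i j
    by (simp add: D1_matrix_canon_def D1_mult_eq_twisted_conv group_ring_simps matrix_ring_simps)
  also have "\<dots> = finsum k ?ab {..<n} \<oplus>\<^bsub>k\<^esub> finsum k ?ba {..<n} \<oplus>\<^bsub>k\<^esub> finsum k ?bb {..<n}"
    by (simp add:
        twisted_conv_matrix_entry[where Y = "\<lambda>t. b2 (g \<otimes>\<^bsub>G\<^esub> t)", OF k a1 D1_components_closed(5) i j]
        twisted_conv_matrix_entry[where Y = "\<lambda>_. a2", OF k D1_components_closed(3) D1_components_closed(2) i j]
        twisted_conv_matrix_entry[where Y = "\<lambda>t. b2 (g \<otimes>\<^bsub>G\<^esub> t)", OF k D1_components_closed(3) D1_components_closed(5) i j])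
  also have "\<dots> = finsum k (\<lambda>l. ?ab l \<oplus>\<^bsub>k\<^esub> ?ba l \<oplus>\<^bsub>k\<^esub> ?bb l) {..<n}"
    using closed by (simp add: finsum_addf)
  also have "\<dots> = finsum k (\<lambda>l. snd (D1_mult k G (D1_matrix_canon (a1, b1) i l) (D1_matrix_canon (a2, b2) l j)) g h) {..<n}"
    using True by (simp add: D1_matrix_canon_def D1_mult_eq_twisted_conv group_ring_simps)
  finally show ?thesis .
next
  case False
  interpret ring k by (rule k)
  from False show ?thesis
    by (auto simp: D1_matrix_canon_def D1_mult_eq_twisted_conv group_ring_simps matrix_ring_simps)
qed

lemma D1_matrix_canon_mult_entry:
  assumes "i < n" and "j < n"
  shows "D1_matrix_canon (D1_mult (matrix_ring n k) G (a1, b1) (a2, b2)) i j =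
    finsum (D1 k G) (\<lambda>l. D1_mult k G (D1_matrix_canon (a1, b1) i l) (D1_matrix_canon (a2, b2) l j))
      {..<n}"
proof -
  interpret ring k by (rule k)
  have "D1_matrix_canon (a1, b1) \<in> carrier (matrix_ring n (D1 k G))"
    and "D1_matrix_canon (a2, b2) \<in> carrier (matrix_ring n (D1 k G))"
    using a1 a2 b1 b2 by (simp_all add: D1_matrix_canon_carrier_iff carrier_D1)
  then have "(\<lambda>l. D1_mult k G (D1_matrix_canon (a1, b1) i l) (D1_matrix_canon (a2, b2) l j))
      \<in> {..<n} \<rightarrow> carrier (D1 k G)"
    using assms by (auto simp: D1_mult_closed[OF k G, unfolded D1_simps] carrier_matrix_ring)
  note finsum_D1 = finsum_D1_apply[OF abelian_monoid_axioms finite_lessThan this]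
  show ?thesis
    by (intro prod_eqI ext)
       (simp_all only: finsum_D1 fst_D1_matrix_canon_mult[OF assms] snd_D1_matrix_canon_mult[OF assms])
qed

lemma D1_matrix_canon_mult_outside:
  assumes "\<not> (i < n \<and> j < n)"
  shows "D1_matrix_canon (D1_mult (matrix_ring n k) G (a1, b1) (a2, b2)) i j = \<zero>\<^bsub>D1 k G\<^esub>"
proof -
  have outside: "(i < n \<and> j < n) = False"
    using assms by blast
  have "fst (D1_matrix_canon (D1_mult (matrix_ring n k) G (a1, b1) (a2, b2)) i j) g = \<zero>\<^bsub>k\<^esub>" for g
    using twisted_conv_matrix_entry_outside[where Y = "\<lambda>_. a2", OF k D1_components_closed(1,2) assms]
    by (simp add: D1_matrix_canon_def D1_mult_eq_twisted_conv)
  then show ?thesis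
    by (simp add: outside D1_simps D1_matrix_canon_def D1_mult_eq_twisted_conv group_ring_simps
        matrix_ring_simps fun_eq_iff)
qed

end

lemma D1_matrix_canon_mult:
  assumes k: "ring k" and G: "group G"
    and p: "p \<in> carrier (D1 (matrix_ring n k) G)" and q: "q \<in> carrier (D1 (matrix_ring n k) G)"
  shows "D1_matrix_canon (p \<otimes>\<^bsub>D1 (matrix_ring n k) G\<^esub> q) =
    D1_matrix_canon p \<otimes>\<^bsub>matrix_ring n (D1 k G)\<^esub> D1_matrix_canon q"
proof (intro ext)
  fix i j
  obtain a1 b1 a2 b2 where pq: "p = (a1, b1)" "q = (a2, b2)"
    by fastforce
  have components: "a1 \<in> carrier (group_ring (matrix_ring n k) G)"
    "a2 \<in> carrier (group_ring (matrix_ring n k) G)"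
    "b1 \<in> carrier (group_ring (group_ring (matrix_ring n k) G) G)"
    "b2 \<in> carrier (group_ring (group_ring (matrix_ring n k) G) G)"
    using p q by (simp_all add: pq carrier_D1)
  show "D1_matrix_canon (p \<otimes>\<^bsub>D1 (matrix_ring n k) G\<^esub> q) i j =
      (D1_matrix_canon p \<otimes>\<^bsub>matrix_ring n (D1 k G)\<^esub> D1_matrix_canon q) i j"
  proof (cases "i < n \<and> j < n")
    case True
    then show ?thesis
      using D1_matrix_canon_mult_entry[OF k G components]
      by (simp add: pq D1_simps matrix_ring_simps)
  next
    case False
    then have outside: "(i < n \<and> j < n) = False"
      by blast
    show ?thesis
      using D1_matrix_canon_mult_outside[OF k G components False]
      by (simp add: outside pq D1_simps matrix_ring_simps)
  qed
qed

lemma D1_matrix_canon_add: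
  "D1_matrix_canon (p \<oplus>\<^bsub>D1 (matrix_ring n k) G\<^esub> q) =
    D1_matrix_canon p \<oplus>\<^bsub>matrix_ring n (D1 k G)\<^esub> D1_matrix_canon q"
  by (auto simp: D1_matrix_canon_def D1_simps matrix_ring_simps group_ring_simps fun_eq_iff)

lemma D1_matrix_canon_one:
  "D1_matrix_canon \<one>\<^bsub>D1 (matrix_ring n k) G\<^esub> = \<one>\<^bsub>matrix_ring n (D1 k G)\<^esub>"
  by (auto simp: D1_matrix_canon_def D1_simps matrix_ring_simps group_ring_simps fun_eq_iff)

lemma bij_betw_D1_matrix_canon:
  fixes k :: "('a, 'm) ring_scheme" and G :: "'g monoid"
  shows "bij_betw D1_matrix_canon (carrier (D1 (matrix_ring n k) G)) (carrier (matrix_ring n (D1 k G)))"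
proof -
  define entries
    :: "(nat \<Rightarrow> nat \<Rightarrow> ('g \<Rightarrow> 'a) \<times> ('g \<Rightarrow> 'g \<Rightarrow> 'a)) \<Rightarrow>
        ('g \<Rightarrow> nat \<Rightarrow> nat \<Rightarrow> 'a) \<times> ('g \<Rightarrow> 'g \<Rightarrow> nat \<Rightarrow> nat \<Rightarrow> 'a)"
    where "entries P = (\<lambda>g i j. fst (P i j) g, \<lambda>g h i j. snd (P i j) g h)" for P
  have canon_entries: "D1_matrix_canon (entries P) = P" for P
    by (simp add: D1_matrix_canon_def entries_def)
  have entries_canon: "entries (D1_matrix_canon p) = p" for p
    by (simp add: D1_matrix_canon_def entries_def)
  have "entries P \<in> carrier (D1 (matrix_ring n k) G)"
    if "P \<in> carrier (matrix_ring n (D1 k G))" for P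
    using that by (simp add: D1_matrix_canon_carrier_iff[symmetric] canon_entries)
  then show ?thesis
    by (intro bij_betw_byWitness[where f' = entries])
       (auto simp: canon_entries entries_canon D1_matrix_canon_carrier_iff)
qed

theorem proposition7p1:
  fixes k :: "'a ring" and G :: "'g monoid" and n :: nat
  assumes "ring k" and "group G" and "n \<ge> 1"
  shows "D1_matrix_canon \<in> ring_iso (D1 (matrix_ring n k) G) (matrix_ring n (D1 k G))"
proof -
  have "D1_matrix_canon \<in> ring_hom (D1 (matrix_ring n k) G) (matrix_ring n (D1 k G))"
    by (rule ring_hom_memI)
       (simp_all add: D1_matrix_canon_carrier_iff D1_matrix_canon_mult[OF assms(1,2)]
         D1_matrix_canon_add D1_matrix_canon_one)
  with bij_betw_D1_matrix_canon show ?thesis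
    by (simp add: ring_iso_def)
qed

end
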